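(* Let $\gamma_a,\gamma_s>0$, $\lambda\ge0$, $q>0$, $\sigma_B>0$, $\varepsilon_a\in(0,2)$, and let $\beta_a,\beta_s:\mathbb R\to\mathbb R$ be globally Lipschitz continuous with $\beta_a\ge0$, $\beta_s>0$. Define \[ f_1(T_a,T_s)=\tfrac{1}{\gamma_a}\big[-\lambda(T_a-T_s)+\varepsilon_a\sigma_B|T_s|^3T_s-2\varepsilon_a\sigma_B|T_a|^3T_a+q\beta_a(T_a)\big], \] \[ f_2(T_a,T_s)=\tfrac{1}{\gamma_s}\big[-\lambda(T_s-T_a)-\sigma_B|T_s|^3T_s+\varepsilon_a\sigma_B|T_a|^3T_a+q\beta_s(T_s)\big], \] and, with $\overline{\mathcal Q}=[0,+\infty)^2$, let $P_+=\{(T_a,T_s)\in\overline{\mathcal Q}: f_1(T_a,T_s)\ge0,\ f_2(T_a,T_s)\ge0\}$ and $P_-=\{(T_a,T_s)\in\overline{\mathcal Q}: f_1(T_a,T_s)\le0,\ f_2(T_a,T_s)\le0\}$. Let $(T_a,T_s)$ be the solution of $T_a'=f_1(T_a,T_s)$, $T_s'=f_2(T_a,T_s)$, $(T_a,T_s)(0)=(T_a^{(0)},T_s^{(0)})$. If $(T_a^{(0)},T_s^{(0)})\in P_+$, then both $t\mapsto T_a(t)$ and $t\mapsto T_s(t)$ are nondecreasing; if $(T_a^{(0)},T_s^{(0)})\in P_-$, then both are nonincreasing. *)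

theory Defs
  imports "HOL-Analysis.Analysis"
begin

definition f1 :: "real \<Rightarrow> real \<Rightarrow> real \<Rightarrow> real \<Rightarrow> real \<Rightarrow> (real \<Rightarrow> real) \<Rightarrow> real \<Rightarrow> real \<Rightarrow> real" where
  "f1 \<gamma>a lam q \<sigma>B \<epsilon>a \<beta>a Ta Ts =
     (1 / \<gamma>a) * (- lam * (Ta - Ts) + \<epsilon>a * \<sigma>B * \<bar>Ts\<bar>^3 * Ts
        - 2 * \<epsilon>a * \<sigma>B * \<bar>Ta\<bar>^3 * Ta + q * \<beta>a Ta)"

definition f2 :: "real \<Rightarrow> real \<Rightarrow> real \<Rightarrow> real \<Rightarrow> real \<Rightarrow> (real \<Rightarrow> real) \<Rightarrow> real \<Rightarrow> real \<Rightarrow> real" where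
  "f2 \<gamma>s lam q \<sigma>B \<epsilon>a \<beta>s Ta Ts =
     (1 / \<gamma>s) * (- lam * (Ts - Ta) - \<sigma>B * \<bar>Ts\<bar>^3 * Ts
        + \<epsilon>a * \<sigma>B * \<bar>Ta\<bar>^3 * Ta + q * \<beta>s Ts)"

end

theory Submission
  imports Defs
begin

(*
  The system is cooperative: f1 is nondecreasing in Ts, f2 is nondecreasing in Ta, and both are
  Lipschitz on bounded sets. For such systems a lower solution that starts below an upper solution
  stays below it: the squared positive part phi of their difference satisfies phi' <= 4 L phi and
  vanishes at time 0, so it vanishes forever by Gronwall's argument. If the initial value lies in
  P+, the constant function at the initial value is a lower solution, so the solution never drops
  below its initial value; comparing the solution with its own time shift by h then gives
  T(t) <= T(t + h).
*)

lemma abs_power_diff_le: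
  fixes x y :: real
  assumes "\<bar>x\<bar> \<le> M" "\<bar>y\<bar> \<le> M"
  shows "\<bar>x ^ n - y ^ n\<bar> \<le> n * M ^ (n - 1) * \<bar>x - y\<bar>"
proof -
  have "\<bar>y ^ (n - Suc i) * x ^ i\<bar> \<le> M ^ (n - 1)" if "i < n" for i
  proof -
    have "\<bar>y ^ (n - Suc i) * x ^ i\<bar> \<le> M ^ (n - Suc i) * M ^ i"
      unfolding abs_mult power_abs using assms
      by (intro mult_mono power_mono) auto
    also have "\<dots> = M ^ (n - 1)"
      using that by (simp flip: power_add)
    finally show ?thesis .
  qed
  then have "\<bar>\<Sum>i<n. y ^ (n - Suc i) * x ^ i\<bar> \<le> n * M ^ (n - 1)"
    by (intro order_trans[OF sum_abs] sum_bounded_above[where A="{..<n}", simplified]) auto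
  then have "\<bar>x ^ n - y ^ n\<bar> \<le> \<bar>x - y\<bar> * (n * M ^ (n - 1))"
    unfolding power_diff_sumr2 abs_mult by (rule mult_left_mono) simp
  then show ?thesis
    by (simp add: mult_ac)
qed

lemma abs_cube_mult_mono:
  fixes x y :: real
  assumes "x \<le> y"
  shows "\<bar>x\<bar> ^ 3 * x \<le> \<bar>y\<bar> ^ 3 * y"
proof -
  have nonneg_case: "a ^ 3 * a \<le> b ^ 3 * b" if "0 \<le> a" "a \<le> b" for a b :: real
    using that by (simp add: mult_mono power_mono)
  consider "0 \<le> x" | "x < 0" "0 \<le> y" | "y < 0"
    by linarith
  then show ?thesis
  proof cases
    case 1
    then show ?thesis using assms nonneg_case[of x y] by simp
  next
    case 2
    have "\<bar>x\<bar> ^ 3 * x \<le> 0" "0 \<le> \<bar>y\<bar> ^ 3 * y"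
      using 2 by (simp_all add: mult_nonneg_nonpos flip: power_Suc2)
    then show ?thesis by linarith
  next
    case 3
    then show ?thesis using assms nonneg_case[of "-y" "-x"] by simp
  qed
qed

lemma abs_cube_mult_lipschitz:
  fixes M :: real
  assumes "0 \<le> M"
  shows "(4 * M ^ 3)-lipschitz_on {-M..M} (\<lambda>x. \<bar>x\<bar> ^ 3 * x)"
proof (rule lipschitz_onI)
  fix x y :: real
  assume "x \<in> {-M..M}" "y \<in> {-M..M}"
  then have x: "\<bar>x\<bar> \<le> M" and y: "\<bar>y\<bar> \<le> M" by auto
  have "\<bar>\<bar>x\<bar> ^ 3 - \<bar>y\<bar> ^ 3\<bar> \<le> 3 * M ^ 2 * \<bar>\<bar>x\<bar> - \<bar>y\<bar>\<bar>"
    using abs_power_diff_le[of "\<bar>x\<bar>" M "\<bar>y\<bar>" 3] x y by simp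
  also have "\<dots> \<le> 3 * M ^ 2 * \<bar>x - y\<bar>"
    by (rule mult_left_mono[OF abs_triangle_ineq3]) simp
  finally have cubes: "\<bar>\<bar>x\<bar> ^ 3 - \<bar>y\<bar> ^ 3\<bar> \<le> 3 * M ^ 2 * \<bar>x - y\<bar>" .
  have "\<bar>x\<bar> ^ 3 * x - \<bar>y\<bar> ^ 3 * y = \<bar>x\<bar> ^ 3 * (x - y) + y * (\<bar>x\<bar> ^ 3 - \<bar>y\<bar> ^ 3)"
    by (simp add: algebra_simps)
  also have "\<bar>\<dots>\<bar> \<le> M ^ 3 * \<bar>x - y\<bar> + M * (3 * M ^ 2 * \<bar>x - y\<bar>)"
    by (intro order_trans[OF abs_triangle_ineq] add_mono)
       (use x y cubes in \<open>auto simp: abs_mult intro!: mult_mono power_mono\<close>)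
  finally show "dist (\<bar>x\<bar> ^ 3 * x) (\<bar>y\<bar> ^ 3 * y) \<le> 4 * M ^ 3 * dist x y"
    by (simp add: dist_real_def power2_eq_square power3_eq_cube algebra_simps)
qed (use assms in simp)

lemma abs_cube_mult_lipschitz_on_bounded:
  fixes T :: "real set"
  assumes "bounded T"
  shows "\<exists>L. L-lipschitz_on T (\<lambda>x. \<bar>x\<bar> ^ 3 * x)"
proof -
  obtain B where "0 < B" "\<And>x. x \<in> T \<Longrightarrow> \<bar>x\<bar> \<le> B"
    using assms by (auto simp: bounded_pos)
  then have "T \<subseteq> {-B..B}"
    by force
  then show ?thesis
    using lipschitz_on_subset[OF abs_cube_mult_lipschitz] \<open>0 < B\<close> by (meson less_imp_le)
qed

lemma has_real_derivative_max0_power2: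
  "((\<lambda>x::real. (max x 0) ^ 2) has_real_derivative 2 * max x 0) (at x)"
proof (cases x "0::real" rule: linorder_cases)
  case less
  have "((\<lambda>x::real. 0) has_real_derivative 0) (at x)"
    by simp
  then have "((\<lambda>x::real. (max x 0) ^ 2) has_real_derivative 0) (at x)"
    by (rule has_field_derivative_transform_within_open[where S="{..<0}"]) (use less in auto)
  then show ?thesis
    using less by simp
next
  case equal
  have "((\<lambda>h::real. max h 0) \<longlongrightarrow> 0) (at 0)"
    by (rule tendsto_eq_intros refl)+ simp
  moreover have "(max h 0) ^ 2 / h = max h 0" for h :: real
    by (cases "h \<le> 0") (auto simp: max_def power2_eq_square)
  ultimately show ?thesis
    using equal by (simp add: DERIV_def)
next
  case greater
  have "((\<lambda>x::real. x ^ 2) has_real_derivative 2 * x) (at x)"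
    by (auto intro!: derivative_eq_intros)
  then have "((\<lambda>x::real. (max x 0) ^ 2) has_real_derivative 2 * x) (at x)"
    by (rule has_field_derivative_transform_within_open[where S="{0<..}"]) (use greater in auto)
  then show ?thesis
    using greater by simp
qed

lemma DERIV_le_linear_imp_exp_bound:
  fixes \<phi> :: "real \<Rightarrow> real"
  assumes "a \<le> b" "continuous_on {a..b} \<phi>"
    and deriv: "\<And>t. a < t \<Longrightarrow> t < b \<Longrightarrow> \<exists>D. (\<phi> has_real_derivative D) (at t) \<and> D \<le> K * \<phi> t"
  shows "\<phi> b \<le> exp (K * (b - a)) * \<phi> a"
proof -
  define \<psi> where "\<psi> t = exp (- K * t) * \<phi> t" for t
  have "\<psi> b \<le> \<psi> a"
  proof (rule DERIV_nonpos_imp_decreasing_open[OF \<open>a \<le> b\<close>])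
    fix t assume "a < t" "t < b"
    then obtain D where D: "(\<phi> has_real_derivative D) (at t)" "D \<le> K * \<phi> t"
      using deriv by blast
    have "(\<psi> has_real_derivative exp (- K * t) * (D - K * \<phi> t)) (at t)"
      unfolding \<psi>_def by (auto intro!: derivative_eq_intros D(1) simp: algebra_simps)
    moreover have "exp (- K * t) * (D - K * \<phi> t) \<le> 0"
      using D(2) by (simp add: mult_nonneg_nonpos)
    ultimately show "\<exists>y. (\<psi> has_real_derivative y) (at t) \<and> y \<le> 0"
      by blast
  qed (unfold \<psi>_def, intro continuous_intros assms(2))
  have "\<phi> b = exp (K * b) * \<psi> b"
    by (simp add: \<psi>_def mult.assoc flip: exp_add)
  also have "\<dots> \<le> exp (K * b) * \<psi> a"
    using \<open>\<psi> b \<le> \<psi> a\<close> by simp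
  also have "\<dots> = exp (K * (b - a)) * \<phi> a"
    by (simp add: \<psi>_def mult.assoc right_diff_distrib flip: exp_add)
  finally show ?thesis .
qed

lemma has_real_derivative_imp_continuous_on:
  "(\<And>t. t \<in> S \<Longrightarrow> \<exists>D. (f has_real_derivative D) (at t within S)) \<Longrightarrow> continuous_on S f"
  by (meson DERIV_continuous continuous_on_eq_continuous_within)

lemma lipschitz_on_comp_fst:
  assumes "C-lipschitz_on (fst ` S) g"
  shows "C-lipschitz_on S (\<lambda>z. g (fst z))"
proof -
  have "1-lipschitz_on S fst"
    by (rule lipschitz_onI) (simp_all add: dist_fst_le)
  from lipschitz_on_compose2[OF this assms] show ?thesis
    by simp
qed

lemma lipschitz_on_comp_snd:
  assumes "C-lipschitz_on (snd ` S) g"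
  shows "C-lipschitz_on S (\<lambda>z. g (snd z))"
proof -
  have "1-lipschitz_on S snd"
    by (rule lipschitz_onI) (simp_all add: dist_snd_le)
  from lipschitz_on_compose2[OF this assms] show ?thesis
    by simp
qed

lemma lipschitz_on_pair_le_sum_abs:
  fixes F :: "real \<Rightarrow> real \<Rightarrow> real"
  assumes "L-lipschitz_on S (\<lambda>(a, b). F a b)" "(a, b) \<in> S" "(c, d) \<in> S"
  shows "\<bar>F a b - F c d\<bar> \<le> L * (\<bar>a - c\<bar> + \<bar>b - d\<bar>)"
proof -
  have "\<bar>F a b - F c d\<bar> \<le> L * dist (a, b) (c, d)"
    using lipschitz_onD[OF assms] by (simp add: dist_real_def)
  also have "\<dots> \<le> L * (\<bar>a - c\<bar> + \<bar>b - d\<bar>)"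
    using lipschitz_on_nonneg[OF assms(1)]
    by (intro mult_left_mono) (simp_all add: dist_Pair_Pair dist_real_def sqrt_sum_squares_le_sum_abs)
  finally show ?thesis .
qed

lemma positive_part_increment_bound:
  fixes F :: "real \<Rightarrow> real \<Rightarrow> real"
  assumes "F u1 (min x2 u2) \<le> F u1 u2" "0 \<le> L"
    and "\<bar>F x1 x2 - F u1 (min x2 u2)\<bar> \<le> L * (\<bar>x1 - u1\<bar> + \<bar>x2 - min x2 u2\<bar>)"
  shows "max (x1 - u1) 0 * (F x1 x2 - F u1 u2)
    \<le> L * max (x1 - u1) 0 * (max (x1 - u1) 0 + max (x2 - u2) 0)"
  \<comment> \<open>Cooperativity lets us lower the second argument at \<open>u\<close> to \<open>min x2 u2\<close>; the two points
     then differ in the second coordinate by exactly the positive part of \<open>x2 - u2\<close>.\<close>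
proof (cases "x1 \<le> u1")
  case False
  have "F x1 x2 - F u1 u2 \<le> L * (\<bar>x1 - u1\<bar> + \<bar>x2 - min x2 u2\<bar>)"
    using assms(1,3) by linarith
  also have "\<dots> = L * (max (x1 - u1) 0 + max (x2 - u2) 0)"
    using False by (simp add: max_def min_def)
  finally show ?thesis
    using False by (simp add: mult_left_mono mult.left_commute)
qed simp

definition solution :: "(real \<Rightarrow> real \<Rightarrow> real) \<Rightarrow> (real \<Rightarrow> real \<Rightarrow> real) \<Rightarrow> (real \<Rightarrow> real) \<Rightarrow> (real \<Rightarrow> real) \<Rightarrow> bool"
  where "solution F G x y \<longleftrightarrow> (\<forall>t\<ge>0.
    (x has_real_derivative F (x t) (y t)) (at t within {0..}) \<and>
    (y has_real_derivative G (x t) (y t)) (at t within {0..}))"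

definition lower_solution :: "(real \<Rightarrow> real \<Rightarrow> real) \<Rightarrow> (real \<Rightarrow> real \<Rightarrow> real) \<Rightarrow> (real \<Rightarrow> real) \<Rightarrow> (real \<Rightarrow> real) \<Rightarrow> bool"
  where "lower_solution F G x y \<longleftrightarrow> (\<forall>t\<ge>0. \<exists>dx dy.
    (x has_real_derivative dx) (at t within {0..}) \<and> (y has_real_derivative dy) (at t within {0..}) \<and>
    dx \<le> F (x t) (y t) \<and> dy \<le> G (x t) (y t))"

definition upper_solution :: "(real \<Rightarrow> real \<Rightarrow> real) \<Rightarrow> (real \<Rightarrow> real \<Rightarrow> real) \<Rightarrow> (real \<Rightarrow> real) \<Rightarrow> (real \<Rightarrow> real) \<Rightarrow> bool"
  where "upper_solution F G x y \<longleftrightarrow> (\<forall>t\<ge>0. \<exists>dx dy.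
    (x has_real_derivative dx) (at t within {0..}) \<and> (y has_real_derivative dy) (at t within {0..}) \<and>
    F (x t) (y t) \<le> dx \<and> G (x t) (y t) \<le> dy)"

lemma solution_imp_lower_solution: "solution F G x y \<Longrightarrow> lower_solution F G x y"
  unfolding solution_def lower_solution_def by blast

lemma solution_imp_upper_solution: "solution F G x y \<Longrightarrow> upper_solution F G x y"
  unfolding solution_def upper_solution_def by blast

lemma lower_solution_const: "0 \<le> F a b \<Longrightarrow> 0 \<le> G a b \<Longrightarrow> lower_solution F G (\<lambda>_. a) (\<lambda>_. b)"
  unfolding lower_solution_def by (blast intro: DERIV_const)

lemma upper_solution_const: "F a b \<le> 0 \<Longrightarrow> G a b \<le> 0 \<Longrightarrow> upper_solution F G (\<lambda>_. a) (\<lambda>_. b)"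
  unfolding upper_solution_def by (blast intro: DERIV_const)

lemma solution_shift:
  assumes "solution F G x y" "0 \<le> h"
  shows "solution F G (\<lambda>t. x (h + t)) (\<lambda>t. y (h + t))"
  unfolding solution_def
proof (intro allI impI conjI)
  fix t :: real assume "0 \<le> t"
  have shift: "((\<lambda>t. f (h + t)) has_real_derivative D) (at t within {0..})"
    if "(f has_real_derivative D) (at (h + t) within {0..})" for f D
    using DERIV_subset[OF that, of "{h..}"] \<open>0 \<le> h\<close> by (simp flip: DERIV_at_within_shift)
  show "((\<lambda>t. x (h + t)) has_real_derivative F (x (h + t)) (y (h + t))) (at t within {0..})"
    "((\<lambda>t. y (h + t)) has_real_derivative G (x (h + t)) (y (h + t))) (at t within {0..})"
    using assms \<open>0 \<le> t\<close> unfolding solution_def by (auto intro!: shift)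
qed

locale cooperative_system =
  fixes F G :: "real \<Rightarrow> real \<Rightarrow> real"
  assumes lipschitz_F: "bounded S \<Longrightarrow> \<exists>L. L-lipschitz_on S (\<lambda>(a, b). F a b)"
    and lipschitz_G: "bounded S \<Longrightarrow> \<exists>L. L-lipschitz_on S (\<lambda>(a, b). G a b)"
    and mono_F: "b \<le> b' \<Longrightarrow> F a b \<le> F a b'"
    and mono_G: "a \<le> a' \<Longrightarrow> G a b \<le> G a' b"
begin

lemma common_lipschitz_on_box:
  obtains L where "L-lipschitz_on ({-M..M} \<times> {-M..M}) (\<lambda>(a, b). F a b)"
    "L-lipschitz_on ({-M..M} \<times> {-M..M}) (\<lambda>(a, b). G a b)"
proof -
  have "bounded ({-M..M} \<times> {-M..M})"
    by (intro bounded_Times bounded_closed_interval)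
  then obtain LF LG where "LF-lipschitz_on ({-M..M} \<times> {-M..M}) (\<lambda>(a, b). F a b)"
    "LG-lipschitz_on ({-M..M} \<times> {-M..M}) (\<lambda>(a, b). G a b)"
    using lipschitz_F lipschitz_G by blast
  then show ?thesis
    by (intro that[of "max LF LG"]) (auto intro: lipschitz_on_le)
qed

lemma positive_gap_derivative_bound:
  assumes LF: "L-lipschitz_on ({-M..M} \<times> {-M..M}) (\<lambda>(a, b). F a b)"
    and LG: "L-lipschitz_on ({-M..M} \<times> {-M..M}) (\<lambda>(a, b). G a b)"
    and bounds: "\<bar>x1\<bar> \<le> M" "\<bar>x2\<bar> \<le> M" "\<bar>u1\<bar> \<le> M" "\<bar>u2\<bar> \<le> M"
    and lower: "dx \<le> F x1 x2" "dy \<le> G x1 x2" and upper: "F u1 u2 \<le> du" "G u1 u2 \<le> dv"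
  defines "d \<equiv> max (x1 - u1) 0" and "e \<equiv> max (x2 - u2) 0"
  shows "2 * d * (dx - du) + 2 * e * (dy - dv) \<le> 4 * L * (d\<^sup>2 + e\<^sup>2)"
proof -
  have L: "0 \<le> L"
    using LF by (rule lipschitz_on_nonneg)
  have box: "(x1, x2) \<in> {-M..M} \<times> {-M..M}" "(u1, min x2 u2) \<in> {-M..M} \<times> {-M..M}"
    "(min x1 u1, u2) \<in> {-M..M} \<times> {-M..M}"
    using bounds by (auto simp: abs_le_iff min_def)
  have "d * (F x1 x2 - F u1 u2) \<le> L * d * (d + e)"
    unfolding d_def e_def
    by (intro positive_part_increment_bound mono_F L lipschitz_on_pair_le_sum_abs[OF LF box(1,2)]) simp
  moreover have "e * (G x1 x2 - G u1 u2) \<le> L * e * (e + d)"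
  proof -
    have "\<bar>G x1 x2 - G (min x1 u1) u2\<bar> \<le> L * (\<bar>x2 - u2\<bar> + \<bar>x1 - min x1 u1\<bar>)"
      using lipschitz_on_pair_le_sum_abs[OF LG box(1,3)] by (simp add: add.commute)
    then show ?thesis
      unfolding d_def e_def
      by (intro positive_part_increment_bound[where F="\<lambda>b a. G a b"] mono_G L) auto
  qed
  moreover have "d * (dx - du) \<le> d * (F x1 x2 - F u1 u2)" "e * (dy - dv) \<le> e * (G x1 x2 - G u1 u2)"
    using lower upper by (auto simp: d_def e_def intro!: mult_left_mono)
  moreover have "L * (2 * d * e) \<le> L * (d\<^sup>2 + e\<^sup>2)"
    using L by (intro mult_left_mono) (auto simp: sum_squares_bound)
  ultimately show ?thesis
    by (simp add: algebra_simps power2_eq_square)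
qed

lemma positive_gap_has_derivative_le:
  assumes lower: "lower_solution F G x y" and upper: "upper_solution F G u v" and "0 < t"
    and LF: "L-lipschitz_on ({-M..M} \<times> {-M..M}) (\<lambda>(a, b). F a b)"
    and LG: "L-lipschitz_on ({-M..M} \<times> {-M..M}) (\<lambda>(a, b). G a b)"
    and bounds: "\<bar>x t\<bar> \<le> M" "\<bar>y t\<bar> \<le> M" "\<bar>u t\<bar> \<le> M" "\<bar>v t\<bar> \<le> M"
  shows "\<exists>D. ((\<lambda>s. (max (x s - u s) 0)\<^sup>2 + (max (y s - v s) 0)\<^sup>2) has_real_derivative D) (at t) \<and>
    D \<le> 4 * L * ((max (x t - u t) 0)\<^sup>2 + (max (y t - v t) 0)\<^sup>2)"
proof -
  have at_t: "at t within {0..} = at t"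
    using \<open>0 < t\<close> by (intro at_within_interior) (simp add: interior_Ici[where b = "-1"])
  obtain dx dy du dv where
    "(x has_real_derivative dx) (at t within {0..})" "(y has_real_derivative dy) (at t within {0..})"
    "(u has_real_derivative du) (at t within {0..})" "(v has_real_derivative dv) (at t within {0..})"
    and ineqs: "dx \<le> F (x t) (y t)" "dy \<le> G (x t) (y t)" "F (u t) (v t) \<le> du" "G (u t) (v t) \<le> dv"
    using lower upper \<open>0 < t\<close> unfolding lower_solution_def upper_solution_def by (meson less_imp_le)
  then have "((\<lambda>s. (max (x s - u s) 0)\<^sup>2 + (max (y s - v s) 0)\<^sup>2) has_real_derivative
      2 * max (x t - u t) 0 * (dx - du) + 2 * max (y t - v t) 0 * (dy - dv)) (at t)"
    unfolding at_t[symmetric]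
    by (intro DERIV_add DERIV_chain2[OF has_real_derivative_max0_power2] DERIV_diff) simp_all
  with positive_gap_derivative_bound[OF LF LG bounds ineqs] show ?thesis
    by blast
qed

lemma comparison:
  assumes lower: "lower_solution F G x y" and upper: "upper_solution F G u v"
    and "x 0 \<le> u 0" "y 0 \<le> v 0" "0 \<le> T"
  shows "x T \<le> u T \<and> y T \<le> v T"
proof -
  have "continuous_on {0..} x" "continuous_on {0..} y" "continuous_on {0..} u" "continuous_on {0..} v"
    using lower upper unfolding lower_solution_def upper_solution_def
    by (auto intro!: has_real_derivative_imp_continuous_on)
  then have cont: "continuous_on {0..T} x" "continuous_on {0..T} y" "continuous_on {0..T} u" "continuous_on {0..T} v"
    by (auto elim: continuous_on_subset)
  have "bounded ((\<lambda>t. \<bar>x t\<bar> + \<bar>y t\<bar> + \<bar>u t\<bar> + \<bar>v t\<bar>) ` {0..T})"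
    by (intro compact_imp_bounded compact_continuous_image continuous_intros cont compact_Icc)
  then obtain M where M: "\<And>t. t \<in> {0..T} \<Longrightarrow> \<bar>x t\<bar> + \<bar>y t\<bar> + \<bar>u t\<bar> + \<bar>v t\<bar> \<le> M"
    unfolding bounded_real by fastforce
  obtain L where LF: "L-lipschitz_on ({-M..M} \<times> {-M..M}) (\<lambda>(a, b). F a b)"
    and LG: "L-lipschitz_on ({-M..M} \<times> {-M..M}) (\<lambda>(a, b). G a b)"
    by (rule common_lipschitz_on_box)
  define \<phi> where "\<phi> t = (max (x t - u t) 0)\<^sup>2 + (max (y t - v t) 0)\<^sup>2" for t
  have "\<phi> T \<le> exp (4 * L * (T - 0)) * \<phi> 0"
  proof (rule DERIV_le_linear_imp_exp_bound)
    show "continuous_on {0..T} \<phi>"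
      unfolding \<phi>_def by (intro continuous_intros cont)
    fix t :: real assume "0 < t" "t < T"
    moreover from this have "\<bar>x t\<bar> \<le> M" "\<bar>y t\<bar> \<le> M" "\<bar>u t\<bar> \<le> M" "\<bar>v t\<bar> \<le> M"
      using M[of t] by auto
    ultimately show "\<exists>D. (\<phi> has_real_derivative D) (at t) \<and> D \<le> 4 * L * \<phi> t"
      unfolding \<phi>_def by (intro positive_gap_has_derivative_le[OF lower upper _ LF LG])
  qed (use \<open>0 \<le> T\<close> in simp)
  moreover have "\<phi> 0 = 0"
    using assms(3,4) by (simp add: \<phi>_def)
  ultimately have "\<phi> T \<le> 0"
    by simp
  then show ?thesis
    unfolding \<phi>_def by (simp add: sum_power2_le_zero_iff max_def split: if_splits)
qed

lemma solution_mono_on: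
  assumes sol: "solution F G x y" and "0 \<le> F (x 0) (y 0)" "0 \<le> G (x 0) (y 0)"
  shows "mono_on {0..} x \<and> mono_on {0..} y"
proof -
  have start: "x 0 \<le> x h \<and> y 0 \<le> y h" if "0 \<le> h" for h
    using comparison[OF lower_solution_const solution_imp_upper_solution[OF sol]] assms that by simp
  have "x r \<le> x s \<and> y r \<le> y s" if "0 \<le> r" "r \<le> s" for r s
    using comparison[OF solution_imp_lower_solution[OF sol]
        solution_imp_upper_solution[OF solution_shift[OF sol, of "s - r"]] _ _ \<open>0 \<le> r\<close>]
      start[of "s - r"] that by simp
  then show ?thesis
    by (auto intro!: mono_onI)
qed

lemma solution_antimono_on:
  assumes sol: "solution F G x y" and "F (x 0) (y 0) \<le> 0" "G (x 0) (y 0) \<le> 0"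
  shows "antimono_on {0..} x \<and> antimono_on {0..} y"
proof -
  have start: "x h \<le> x 0 \<and> y h \<le> y 0" if "0 \<le> h" for h
    using comparison[OF solution_imp_lower_solution[OF sol] upper_solution_const] assms that by simp
  have "x s \<le> x r \<and> y s \<le> y r" if "0 \<le> r" "r \<le> s" for r s
    using comparison[OF solution_imp_lower_solution[OF solution_shift[OF sol, of "s - r"]]
        solution_imp_upper_solution[OF sol] _ _ \<open>0 \<le> r\<close>]
      start[of "s - r"] that by simp
  then show ?thesis
    by (auto intro!: monotone_onI)
qed

end

lemma f1_lipschitz_on_bounded:
  assumes "L\<beta>-lipschitz_on UNIV \<beta>" "bounded S"
  shows "\<exists>L. L-lipschitz_on S (\<lambda>(a, b). f1 \<gamma> lam q \<sigma> \<epsilon> \<beta> a b)"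
proof -
  obtain La where a: "La-lipschitz_on (fst ` S) (\<lambda>x. \<bar>x\<bar> ^ 3 * x)"
    using abs_cube_mult_lipschitz_on_bounded bounded_fst[OF \<open>bounded S\<close>] by blast
  obtain Lb where b: "Lb-lipschitz_on (snd ` S) (\<lambda>x. \<bar>x\<bar> ^ 3 * x)"
    using abs_cube_mult_lipschitz_on_bounded bounded_snd[OF \<open>bounded S\<close>] by blast
  have "L\<beta>-lipschitz_on (fst ` S) \<beta>"
    using assms(1) by (rule lipschitz_on_subset) simp
  note comps = lipschitz_on_comp_fst[OF a] lipschitz_on_comp_snd[OF b]
    lipschitz_on_comp_fst[OF this] lipschitz_on_comp_fst[OF lipschitz_on_id] lipschitz_on_comp_snd[OF lipschitz_on_id]
  show ?thesis
    unfolding f1_def case_prod_beta' mult.assoc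
    by (rule exI, (rule lipschitz_on_cmult_real lipschitz_on_add lipschitz_on_diff comps)+)
qed

lemma f2_lipschitz_on_bounded:
  assumes "L\<beta>-lipschitz_on UNIV \<beta>" "bounded S"
  shows "\<exists>L. L-lipschitz_on S (\<lambda>(a, b). f2 \<gamma> lam q \<sigma> \<epsilon> \<beta> a b)"
proof -
  obtain La where a: "La-lipschitz_on (fst ` S) (\<lambda>x. \<bar>x\<bar> ^ 3 * x)"
    using abs_cube_mult_lipschitz_on_bounded bounded_fst[OF \<open>bounded S\<close>] by blast
  obtain Lb where b: "Lb-lipschitz_on (snd ` S) (\<lambda>x. \<bar>x\<bar> ^ 3 * x)"
    using abs_cube_mult_lipschitz_on_bounded bounded_snd[OF \<open>bounded S\<close>] by blast
  have "L\<beta>-lipschitz_on (snd ` S) \<beta>"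
    using assms(1) by (rule lipschitz_on_subset) simp
  note comps = lipschitz_on_comp_fst[OF a] lipschitz_on_comp_snd[OF b]
    lipschitz_on_comp_snd[OF this] lipschitz_on_comp_fst[OF lipschitz_on_id] lipschitz_on_comp_snd[OF lipschitz_on_id]
  show ?thesis
    unfolding f2_def case_prod_beta' mult.assoc
    by (rule exI, (rule lipschitz_on_cmult_real lipschitz_on_add lipschitz_on_diff comps)+)
qed

lemma f1_mono_right:
  assumes "0 \<le> \<gamma>" "0 \<le> lam" "0 \<le> \<epsilon>" "0 \<le> \<sigma>" "b \<le> b'"
  shows "f1 \<gamma> lam q \<sigma> \<epsilon> \<beta> a b \<le> f1 \<gamma> lam q \<sigma> \<epsilon> \<beta> a b'"
proof -
  have "lam * b \<le> lam * b'"
    using assms by (simp add: mult_left_mono)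
  moreover have "\<epsilon> * \<sigma> * (\<bar>b\<bar> ^ 3 * b) \<le> \<epsilon> * \<sigma> * (\<bar>b'\<bar> ^ 3 * b')"
    using assms by (intro mult_left_mono abs_cube_mult_mono) auto
  ultimately show ?thesis
    unfolding f1_def using assms by (intro mult_left_mono) (auto simp: algebra_simps)
qed

lemma f2_mono_left:
  assumes "0 \<le> \<gamma>" "0 \<le> lam" "0 \<le> \<epsilon>" "0 \<le> \<sigma>" "a \<le> a'"
  shows "f2 \<gamma> lam q \<sigma> \<epsilon> \<beta> a b \<le> f2 \<gamma> lam q \<sigma> \<epsilon> \<beta> a' b"
proof -
  have "lam * a \<le> lam * a'"
    using assms by (simp add: mult_left_mono)
  moreover have "\<epsilon> * \<sigma> * (\<bar>a\<bar> ^ 3 * a) \<le> \<epsilon> * \<sigma> * (\<bar>a'\<bar> ^ 3 * a')"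
    using assms by (intro mult_left_mono abs_cube_mult_mono) auto
  ultimately show ?thesis
    unfolding f2_def using assms by (intro mult_left_mono) (auto simp: algebra_simps)
qed

theorem lemma4p5:
  fixes \<gamma>a \<gamma>s lam q \<sigma>B \<epsilon>a Ta0 Ts0 :: real
    and \<beta>a \<beta>s Ta Ts :: "real \<Rightarrow> real"
  assumes "\<gamma>a > 0" "\<gamma>s > 0" "lam \<ge> 0" "q > 0" "\<sigma>B > 0" "0 < \<epsilon>a" "\<epsilon>a < 2"
    and "\<exists>L. L-lipschitz_on UNIV \<beta>a" "\<exists>L. L-lipschitz_on UNIV \<beta>s"
    and "\<And>x. \<beta>a x \<ge> 0" "\<And>x. \<beta>s x > 0"
    and "\<And>t. t \<ge> 0 \<Longrightarrow>
           (Ta has_real_derivative f1 \<gamma>a lam q \<sigma>B \<epsilon>a \<beta>a (Ta t) (Ts t)) (at t within {0..})"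
    and "\<And>t. t \<ge> 0 \<Longrightarrow>
           (Ts has_real_derivative f2 \<gamma>s lam q \<sigma>B \<epsilon>a \<beta>s (Ta t) (Ts t)) (at t within {0..})"
    and "Ta 0 = Ta0" "Ts 0 = Ts0"
  shows "((Ta0, Ts0) \<in> {(x, y). x \<ge> 0 \<and> y \<ge> 0 \<and>
              f1 \<gamma>a lam q \<sigma>B \<epsilon>a \<beta>a x y \<ge> 0 \<and> f2 \<gamma>s lam q \<sigma>B \<epsilon>a \<beta>s x y \<ge> 0}
            \<longrightarrow> mono_on {0..} Ta \<and> mono_on {0..} Ts)
       \<and> ((Ta0, Ts0) \<in> {(x, y). x \<ge> 0 \<and> y \<ge> 0 \<and>
              f1 \<gamma>a lam q \<sigma>B \<epsilon>a \<beta>a x y \<le> 0 \<and> f2 \<gamma>s lam q \<sigma>B \<epsilon>a \<beta>s x y \<le> 0}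
            \<longrightarrow> antimono_on {0..} Ta \<and> antimono_on {0..} Ts)"
proof -
  obtain La Ls where La: "La-lipschitz_on UNIV \<beta>a" and Ls: "Ls-lipschitz_on UNIV \<beta>s"
    using assms(8,9) by blast
  interpret cooperative_system "f1 \<gamma>a lam q \<sigma>B \<epsilon>a \<beta>a" "f2 \<gamma>s lam q \<sigma>B \<epsilon>a \<beta>s"
  proof
    show "\<exists>L. L-lipschitz_on S (\<lambda>(a, b). f1 \<gamma>a lam q \<sigma>B \<epsilon>a \<beta>a a b)"
      "\<exists>L. L-lipschitz_on S (\<lambda>(a, b). f2 \<gamma>s lam q \<sigma>B \<epsilon>a \<beta>s a b)" if "bounded S" for S
      using f1_lipschitz_on_bounded[OF La that] f2_lipschitz_on_bounded[OF Ls that] .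
    show "f1 \<gamma>a lam q \<sigma>B \<epsilon>a \<beta>a a b \<le> f1 \<gamma>a lam q \<sigma>B \<epsilon>a \<beta>a a b'" if "b \<le> b'" for a b b'
      using assms(1-6) that by (intro f1_mono_right) auto
    show "f2 \<gamma>s lam q \<sigma>B \<epsilon>a \<beta>s a b \<le> f2 \<gamma>s lam q \<sigma>B \<epsilon>a \<beta>s a' b" if "a \<le> a'" for a a' b
      using assms(1-6) that by (intro f2_mono_left) auto
  qed
  have "solution (f1 \<gamma>a lam q \<sigma>B \<epsilon>a \<beta>a) (f2 \<gamma>s lam q \<sigma>B \<epsilon>a \<beta>s) Ta Ts"
    unfolding solution_def using assms(12,13) by blast
  from solution_mono_on[OF this] solution_antimono_on[OF this] show ?thesis
    using assms(14,15) by auto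
qed

end
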